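(* Let $u:X\to\mathbb{R}$ be non-constant affine and let $\succ_1,\succ_2$ be hope-and-prepare preferences on $\mathcal{F}$ with unique representations $(u,C_1,D_1)$ and $(u,C_2,D_2)$ respectively. Then: (i) $\succ_1$ is more ambiguity averse than $\succ_2$ if and only if $C_2\subseteq C_1$; (ii) $\succ_1$ is more ambiguity loving than $\succ_2$ if and only if $D_2\subseteq D_1$.
   Context: $S$ is a set of states with algebra $\Sigma$; $X$ is a non-singleton convex subset of a real vector space; $\mathcal{F}$ is the set of simple acts $f:S\to X$; elements of $X$ are identified with constant acts; $\Delta$ is the set of finitely additive probability measures on $(S,\Sigma)$ with weak* topology. A hope-and-prepare preference with representation $(u,C,D)$ ($C,D\subseteq\Delta$ convex compact, $C\cap D\neq\emptyset$) is the relation: $f\succ g$ iff $\min_{p\in C}\int u(f)dp>\min_{p\in C}\int u(g)dp$ and $\max_{p\in D}\int u(f)dp>\max_{p\in D}\int u(g)dp$; unique representation means $C,D$ unique and $u$ unique up to positive affine transformation. $\succ_1$ is more ambiguity averse than $\succ_2$ if for all $f\in\mathcal{F}$, $x\in X$, $f\succ_1 x$ implies $f\succ_2 x$; $\succ_1$ is more ambiguity loving than $\succ_2$ if for all $f\in\mathcal{F}$, $x\in X$, $x\succ_1 f$ implies $x\succ_2 f$. *)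

theory Defs
  imports "HOL-Analysis.Analysis"
begin

text \<open>Convention: a measure is a function on all sets of type 's
that vanishes off Sig (canonical extension by zero), so that it can be viewed
as a point of the product space ('s set \<Rightarrow> real).\<close>
definition fa_probs :: "'s set set \<Rightarrow> ('s set \<Rightarrow> real) set" where
  "fa_probs Sig = {p. (\<forall>A. A \<notin> Sig \<longrightarrow> p A = 0)
      \<and> (\<forall>A\<in>Sig. 0 \<le> p A) \<and> p UNIV = 1
      \<and> (\<forall>A\<in>Sig. \<forall>B\<in>Sig. A \<inter> B = {} \<longrightarrow> p (A \<union> B) = p A + p B)}"

definition simple_acts :: "'s set set \<Rightarrow> 'x set \<Rightarrow> ('s \<Rightarrow> 'x) set" where
  "simple_acts Sig X = {f. range f \<subseteq> X \<and> finite (range f) \<and> (\<forall>y. f -` {y} \<in> Sig)}"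

definition EU :: "('x \<Rightarrow> real) \<Rightarrow> ('s set \<Rightarrow> real) \<Rightarrow> ('s \<Rightarrow> 'x) \<Rightarrow> real" where
  "EU u p f = (\<Sum>y\<in>range f. u y * p (f -` {y}))"

definition affine_on :: "'x::real_vector set \<Rightarrow> ('x \<Rightarrow> real) \<Rightarrow> bool" where
  "affine_on X u \<longleftrightarrow> (\<forall>x\<in>X. \<forall>y\<in>X. \<forall>t::real. 0 \<le> t \<and> t \<le> 1 \<longrightarrow>
       u (t *\<^sub>R x + (1 - t) *\<^sub>R y) = t * u x + (1 - t) * u y)"

definition nonconstant_on :: "'x set \<Rightarrow> ('x \<Rightarrow> real) \<Rightarrow> bool" where
  "nonconstant_on X u \<longleftrightarrow> (\<exists>x\<in>X. \<exists>y\<in>X. u x \<noteq> u y)"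

definition convex_ms :: "('s set \<Rightarrow> real) set \<Rightarrow> bool" where
  "convex_ms C \<longleftrightarrow> (\<forall>p\<in>C. \<forall>q\<in>C. \<forall>t::real. 0 \<le> t \<and> t \<le> 1 \<longrightarrow>
       (\<lambda>A. t * p A + (1 - t) * q A) \<in> C)"

text \<open>Compactness is w.r.t. the product topology on
('s set \<Rightarrow> real), i.e. setwise convergence, which agrees with the weak* topology
on the set of finitely additive probabilities.\<close>
definition hp_rep :: "'s set set \<Rightarrow> 'x::real_vector set \<Rightarrow> (('s \<Rightarrow> 'x) \<Rightarrow> ('s \<Rightarrow> 'x) \<Rightarrow> bool)
    \<Rightarrow> ('x \<Rightarrow> real) \<Rightarrow> ('s set \<Rightarrow> real) set \<Rightarrow> ('s set \<Rightarrow> real) set \<Rightarrow> bool" where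
  "hp_rep Sig X pref u C D \<longleftrightarrow>
     affine_on X u \<and> nonconstant_on X u \<and>
     C \<subseteq> fa_probs Sig \<and> D \<subseteq> fa_probs Sig \<and>
     convex_ms C \<and> convex_ms D \<and> compact C \<and> compact D \<and> C \<inter> D \<noteq> {} \<and>
     (\<forall>f\<in>simple_acts Sig X. \<forall>g\<in>simple_acts Sig X.
        pref f g \<longleftrightarrow>
          ((INF p\<in>C. EU u p f) > (INF p\<in>C. EU u p g) \<and>
           (SUP p\<in>D. EU u p f) > (SUP p\<in>D. EU u p g)))"

definition hp_unique_rep :: "'s set set \<Rightarrow> 'x::real_vector set \<Rightarrow> (('s \<Rightarrow> 'x) \<Rightarrow> ('s \<Rightarrow> 'x) \<Rightarrow> bool)
    \<Rightarrow> ('x \<Rightarrow> real) \<Rightarrow> ('s set \<Rightarrow> real) set \<Rightarrow> ('s set \<Rightarrow> real) set \<Rightarrow> bool" where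
  "hp_unique_rep Sig X pref u C D \<longleftrightarrow>
     hp_rep Sig X pref u C D \<and>
     (\<forall>u' C' D'. hp_rep Sig X pref u' C' D' \<longrightarrow>
        C' = C \<and> D' = D \<and> (\<exists>a>0. \<exists>b. \<forall>x\<in>X. u' x = a * u x + b))"

definition more_ambiguity_averse where
  "more_ambiguity_averse Sig X pref1 pref2 \<longleftrightarrow>
     (\<forall>f\<in>simple_acts Sig X. \<forall>x\<in>X. pref1 f (\<lambda>_. x) \<longrightarrow> pref2 f (\<lambda>_. x))"

definition more_ambiguity_loving where
  "more_ambiguity_loving Sig X pref1 pref2 \<longleftrightarrow>
     (\<forall>f\<in>simple_acts Sig X. \<forall>x\<in>X. pref1 (\<lambda>_. x) f \<longrightarrow> pref2 (\<lambda>_. x) f)"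

end

theory Submission
  imports Defs
begin

text \<open>In a hope-and-prepare preference, \<open>f \<succ> x\<close> for a constant \<open>x\<close> holds iff \<open>u x\<close> is
below the maxmin value \<open>min\<^sub>C \<integral>u(f)\<close>, and \<open>x \<succ> f\<close> iff \<open>u x\<close> is above the maxmax value
\<open>max\<^sub>D \<integral>u(f)\<close>: both criteria agree on constants, and \<open>min\<^sub>C \<le> max\<^sub>D\<close> as \<open>C \<inter> D \<noteq> {}\<close>.
Part (ii) is then part (i) for the utility \<open>-u\<close>.

For (i), \<open>C\<^sub>2 \<subseteq> C\<^sub>1\<close> only raises the minimum. Conversely, let \<open>p \<in> C\<^sub>2 - C\<^sub>1\<close>. Since \<open>C\<^sub>1\<close>
is compact for setwise convergence, finitely many events distinguish every \<open>r \<in> C\<^sub>1\<close> from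
\<open>p\<close>; on the finite partition they generate, the point of \<open>C\<^sub>1\<close> nearest to \<open>p\<close> gives a
simple function \<open>\<phi>\<close> and \<open>\<delta> > 0\<close> with \<open>\<integral>\<phi> dp + \<delta> \<le> \<integral>\<phi> dr\<close> for all \<open>r \<in> C\<^sub>1\<close>. As \<open>u\<close> is
affine and non-constant on the convex \<open>X\<close>, a positive affine image of \<open>\<phi>\<close> is \<open>u(f)\<close> for
a simple act \<open>f\<close>, and a constant \<open>x\<close> with utility strictly between \<open>\<integral>u(f) dp\<close> and
\<open>min\<^sub>C\<^sub>1 \<integral>u(f)\<close> satisfies \<open>f \<succ>\<^sub>1 x\<close> but not \<open>f \<succ>\<^sub>2 x\<close>.\<close>

section \<open>Finitely additive probabilities and expected utility of simple acts\<close>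

lemma fa_probsD:
  assumes "r \<in> fa_probs Sig"
  shows fa_probs_outside: "A \<notin> Sig \<Longrightarrow> r A = 0"
    and fa_probs_nonneg: "A \<in> Sig \<Longrightarrow> 0 \<le> r A"
    and fa_probs_UNIV: "r UNIV = 1"
    and fa_probs_Un: "A \<in> Sig \<Longrightarrow> B \<in> Sig \<Longrightarrow> A \<inter> B = {} \<Longrightarrow> r (A \<union> B) = r A + r B"
  using assms unfolding fa_probs_def by blast+

lemma fa_probs_empty:
  assumes "algebra UNIV Sig" "r \<in> fa_probs Sig"
  shows "r {} = 0"
proof -
  interpret algebra UNIV Sig by fact
  show ?thesis
    using fa_probs_Un[OF assms(2), of "{}" "{}"] by simp
qed

lemma fa_probs_le_1:
  assumes "algebra UNIV Sig" "r \<in> fa_probs Sig" "A \<in> Sig"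
  shows "r A \<le> 1"
proof -
  have "- A \<in> Sig"
    using algebra.compl_sets[OF assms(1,3)] by (simp add: Compl_eq_Diff_UNIV)
  have "1 = r (A \<union> - A)"
    using fa_probs_UNIV[OF assms(2)] by simp
  also have "\<dots> = r A + r (- A)"
    using \<open>- A \<in> Sig\<close> by (intro fa_probs_Un[OF assms(2,3)]) auto
  finally show ?thesis
    using fa_probs_nonneg[OF assms(2) \<open>- A \<in> Sig\<close>] by simp
qed

lemma fa_probs_UN:
  assumes "algebra UNIV Sig" "r \<in> fa_probs Sig" "finite I"
    and "\<And>i. i \<in> I \<Longrightarrow> A i \<in> Sig" "disjoint_family_on A I"
  shows "r (\<Union>i\<in>I. A i) = (\<Sum>i\<in>I. r (A i))"
  using assms(3-5)
proof (induction I rule: finite_induct)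
  case empty
  show ?case using fa_probs_empty[OF assms(1,2)] by simp
next
  case (insert i I)
  interpret algebra UNIV Sig by fact
  have "(\<Union>j\<in>I. A j) \<in> Sig"
    using insert.hyps(1) insert.prems(1) by auto
  moreover have "A i \<inter> (\<Union>j\<in>I. A j) = {}" and "disjoint_family_on A I"
    using insert.prems(2) insert.hyps(2) by (simp_all add: disjoint_family_on_insert)
  ultimately show ?case
    using insert fa_probs_Un[OF assms(2)] by simp
qed

lemma simple_actsD:
  assumes "f \<in> simple_acts Sig X"
  shows simple_acts_range: "range f \<subseteq> X"
    and simple_acts_finite_range: "finite (range f)"
    and simple_acts_fibre: "f -` {y} \<in> Sig"
  using assms unfolding simple_acts_def by blast+

lemma vimage_eq_UN_fibres: "f -` B = (\<Union>y\<in>B \<inter> range f. f -` {y})"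
  by auto

lemma simple_acts_vimage:
  assumes "algebra UNIV Sig" "f \<in> simple_acts Sig X"
  shows "f -` B \<in> Sig"
proof -
  interpret algebra UNIV Sig by fact
  show ?thesis
    unfolding vimage_eq_UN_fibres[of f B] using simple_actsD[OF assms(2)] by auto
qed

lemma fa_probs_vimage:
  assumes "algebra UNIV Sig" "r \<in> fa_probs Sig" "f \<in> simple_acts Sig X"
  shows "r (f -` B) = (\<Sum>y\<in>B \<inter> range f. r (f -` {y}))"
  unfolding vimage_eq_UN_fibres[of f B]
  using simple_actsD[OF assms(3)]
  by (intro fa_probs_UN[OF assms(1,2)]) (auto simp: disjoint_family_on_def)

lemma fa_probs_eq_on_vimages:
  assumes "algebra UNIV Sig" "r \<in> fa_probs Sig" "p \<in> fa_probs Sig" "h \<in> simple_acts Sig Y"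
    and "\<And>y. y \<in> range h \<Longrightarrow> r (h -` {y}) = p (h -` {y})"
  shows "r (h -` B) = p (h -` B)"
proof -
  have "r (h -` B) = (\<Sum>y\<in>B \<inter> range h. r (h -` {y}))"
    by (rule fa_probs_vimage[OF assms(1,2,4)])
  also have "\<dots> = (\<Sum>y\<in>B \<inter> range h. p (h -` {y}))"
    using assms(5) by (intro sum.cong) auto
  also have "\<dots> = p (h -` B)"
    by (rule fa_probs_vimage[OF assms(1,3,4), symmetric])
  finally show ?thesis .
qed

lemma simple_acts_const:
  assumes "algebra UNIV Sig" "x \<in> X"
  shows "(\<lambda>_. x) \<in> simple_acts Sig X"
proof -
  interpret algebra UNIV Sig by fact
  have "(\<lambda>_. x) -` {y} \<in> {{}, UNIV}" for y
    by auto
  then show ?thesis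
    using assms(2) unfolding simple_acts_def by auto
qed

lemma simple_acts_comp:
  assumes "algebra UNIV Sig" "f \<in> simple_acts Sig Y" "\<And>y. y \<in> range f \<Longrightarrow> v y \<in> X"
  shows "v \<circ> f \<in> simple_acts Sig X"
proof -
  have "(v \<circ> f) -` {z} = f -` (v -` {z})" for z
    by auto
  moreover have "range (v \<circ> f) = v ` range f"
    by auto
  ultimately show ?thesis
    using assms simple_acts_vimage[OF assms(1,2)] simple_actsD[OF assms(2)]
    unfolding simple_acts_def by auto
qed

lemma EU_const:
  assumes "r \<in> fa_probs Sig"
  shows "EU u r (\<lambda>_. x) = u x"
  using fa_probs_UNIV[OF assms] by (simp add: EU_def)

lemma EU_cong: "(\<And>y. y \<in> range f \<Longrightarrow> u y = w y) \<Longrightarrow> EU u r f = EU w r f"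
  unfolding EU_def by (rule sum.cong) simp_all

lemma EU_uminus: "EU (\<lambda>y. - u y) r f = - EU u r f"
  by (simp add: EU_def sum_negf)

lemma fa_probs_sum_fibres:
  assumes "algebra UNIV Sig" "r \<in> fa_probs Sig" "f \<in> simple_acts Sig X"
  shows "(\<Sum>y\<in>range f. r (f -` {y})) = 1"
  using fa_probs_vimage[OF assms, of UNIV] fa_probs_UNIV[OF assms(2)] by simp

lemma EU_affine:
  assumes "algebra UNIV Sig" "r \<in> fa_probs Sig" "f \<in> simple_acts Sig X"
  shows "EU (\<lambda>y. a + b * u y) r f = a + b * EU u r f"
proof -
  have "EU (\<lambda>y. a + b * u y) r f = a * (\<Sum>y\<in>range f. r (f -` {y})) + b * EU u r f"
    by (simp add: EU_def algebra_simps sum.distrib sum_distrib_left)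
  then show ?thesis
    using fa_probs_sum_fibres[OF assms] by simp
qed

lemma EU_comp:
  assumes "algebra UNIV Sig" "r \<in> fa_probs Sig" "f \<in> simple_acts Sig Y"
  shows "EU u r (v \<circ> f) = EU (u \<circ> v) r f"
proof -
  have "r (f -` (v -` {z})) = (\<Sum>y\<in>{y \<in> range f. v y = z}. r (f -` {y}))" for z
  proof -
    have "v -` {z} \<inter> range f = {y \<in> range f. v y = z}"
      by auto
    then show ?thesis
      using fa_probs_vimage[OF assms, of "v -` {z}"] by simp
  qed
  then have "EU u r (v \<circ> f) = (\<Sum>z\<in>v ` range f. u z * (\<Sum>y\<in>{y \<in> range f. v y = z}. r (f -` {y})))"
    unfolding EU_def image_comp[symmetric] vimage_comp[symmetric] by simp
  also have "\<dots> = (\<Sum>z\<in>v ` range f. \<Sum>y\<in>{y \<in> range f. v y = z}. u (v y) * r (f -` {y}))"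
  proof (rule sum.cong[OF refl])
    fix z
    show "u z * (\<Sum>y\<in>{y \<in> range f. v y = z}. r (f -` {y}))
      = (\<Sum>y\<in>{y \<in> range f. v y = z}. u (v y) * r (f -` {y}))"
      unfolding sum_distrib_left by (rule sum.cong) auto
  qed
  also have "\<dots> = EU (u \<circ> v) r f"
    unfolding EU_def comp_def using simple_acts_finite_range[OF assms(3)] by (intro sum.group) auto
  finally show ?thesis .
qed

lemma EU_abs_le:
  assumes "algebra UNIV Sig" "r \<in> fa_probs Sig" "f \<in> simple_acts Sig X"
  shows "\<bar>EU u r f\<bar> \<le> (\<Sum>y\<in>range f. \<bar>u y\<bar>)"
proof -
  have "\<bar>u y * r (f -` {y})\<bar> \<le> \<bar>u y\<bar>" for y
    using fa_probs_nonneg[OF assms(2)] fa_probs_le_1[OF assms(1,2)] simple_acts_fibre[OF assms(3)]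
    by (simp add: abs_mult mult_left_le)
  then have "(\<Sum>y\<in>range f. \<bar>u y * r (f -` {y})\<bar>) \<le> (\<Sum>y\<in>range f. \<bar>u y\<bar>)"
    by (rule sum_mono)
  then show ?thesis
    unfolding EU_def by (rule order_trans[OF sum_abs])
qed

lemma EU_bdd:
  assumes "algebra UNIV Sig" "K \<subseteq> fa_probs Sig" "f \<in> simple_acts Sig X"
  shows "bdd_below ((\<lambda>p. EU u p f) ` K)" "bdd_above ((\<lambda>p. EU u p f) ` K)"
proof -
  define b where "b = (\<Sum>y\<in>range f. \<bar>u y\<bar>)"
  have "- b \<le> EU u p f \<and> EU u p f \<le> b" if "p \<in> K" for p
    using EU_abs_le[OF assms(1) _ assms(3), of p u] assms(2) that unfolding b_def by auto
  then show "bdd_below ((\<lambda>p. EU u p f) ` K)" "bdd_above ((\<lambda>p. EU u p f) ` K)"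
    by (auto intro!: bdd_belowI2[where m = "- b"] bdd_aboveI2[where M = b])
qed

lemma affine_on_atLeastAtMost_subset_image:
  assumes "convex X" "affine_on X u" "x0 \<in> X" "x1 \<in> X"
  shows "{u x0..u x1} \<subseteq> u ` X"
proof
  fix a assume a: "a \<in> {u x0..u x1}"
  define t where "t = (a - u x0) / (u x1 - u x0)"
  have t: "0 \<le> t" "t \<le> 1"
    using a unfolding t_def by (cases "u x1 = u x0"; auto simp: divide_simps)+
  have "t *\<^sub>R x1 + (1 - t) *\<^sub>R x0 \<in> X"
    using assms(1,3,4) t unfolding convex_def by auto
  moreover have "u (t *\<^sub>R x1 + (1 - t) *\<^sub>R x0) = u x0 + t * (u x1 - u x0)"
    using assms(2-4) t unfolding affine_on_def by (simp add: algebra_simps)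
  moreover have "u x0 + t * (u x1 - u x0) = a"
    using a unfolding t_def by (cases "u x1 = u x0") auto
  ultimately show "a \<in> u ` X"
    by (metis image_eqI)
qed

lemma simple_act_with_rescaled_EU:
  fixes \<phi> :: "'s \<Rightarrow> real"
  assumes "algebra UNIV Sig" "convex X" "affine_on X u" "nonconstant_on X u"
    and "\<phi> \<in> simple_acts Sig UNIV" "M > 0" "\<And>s. \<bar>\<phi> s\<bar> \<le> M"
  obtains f \<alpha> \<beta> where "f \<in> simple_acts Sig X" "\<beta> > 0"
    "\<And>r. r \<in> fa_probs Sig \<Longrightarrow> EU u r f = \<alpha> + \<beta> * EU id r \<phi>"
    "\<And>w. \<bar>w\<bar> \<le> M \<Longrightarrow> \<alpha> + \<beta> * w \<in> u ` X"
proof -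
  obtain x0 x1 where x: "x0 \<in> X" "x1 \<in> X" "u x0 < u x1"
    using assms(4) unfolding nonconstant_on_def by (metis linorder_neq_iff)
  define \<alpha> where "\<alpha> = (u x0 + u x1) / 2"
  define \<beta> where "\<beta> = (u x1 - u x0) / (2 * M)"
  have "\<beta> > 0"
    using x(3) assms(6) by (simp add: \<beta>_def)
  have in_image: "\<alpha> + \<beta> * w \<in> u ` X" if "\<bar>w\<bar> \<le> M" for w
  proof -
    have "\<bar>\<beta> * w\<bar> \<le> \<beta> * M"
      using \<open>\<beta> > 0\<close> that by (simp add: abs_mult)
    also have "\<beta> * M = (u x1 - u x0) / 2"
      using assms(6) by (simp add: \<beta>_def)
    finally have "\<bar>\<beta> * w\<bar> \<le> (u x1 - u x0) / 2" .
    then have "\<alpha> + \<beta> * w \<in> {u x0..u x1}"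
      by (auto simp: \<alpha>_def abs_le_iff field_simps)
    then show ?thesis
      using affine_on_atLeastAtMost_subset_image[OF assms(2,3) x(1,2)] by blast
  qed
  define v where "v w = (SOME x. x \<in> X \<and> u x = \<alpha> + \<beta> * w)" for w
  have v: "v w \<in> X \<and> u (v w) = \<alpha> + \<beta> * w" if "\<bar>w\<bar> \<le> M" for w
    unfolding v_def by (rule someI_ex) (use in_image[OF that] in force)
  show ?thesis
  proof (rule that)
    show "v \<circ> \<phi> \<in> simple_acts Sig X"
      using simple_acts_comp[OF assms(1,5)] v assms(7) by blast
    show "EU u r (v \<circ> \<phi>) = \<alpha> + \<beta> * EU id r \<phi>" if "r \<in> fa_probs Sig" for r
    proof -
      have "EU u r (v \<circ> \<phi>) = EU (u \<circ> v) r \<phi>"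
        by (rule EU_comp[OF assms(1) that assms(5)])
      also have "\<dots> = EU (\<lambda>w. \<alpha> + \<beta> * id w) r \<phi>"
        using v assms(7) by (intro EU_cong) auto
      also have "\<dots> = \<alpha> + \<beta> * EU id r \<phi>"
        by (rule EU_affine[OF assms(1) that assms(5)])
      finally show ?thesis .
    qed
  qed (use \<open>\<beta> > 0\<close> in_image in auto)
qed

section \<open>Strict separation from a compact convex set of probabilities\<close>

lemma compact_finite_coordinates_distinguish:
  fixes K :: "('a \<Rightarrow> 'b::t2_space) set"
  assumes "compact K" "p \<notin> K"
  obtains A where "finite A" "\<And>r. r \<in> K \<Longrightarrow> \<exists>a\<in>A. r a \<noteq> p a"
proof -
  have "open {r::'a \<Rightarrow> 'b. r a \<noteq> p a}" for a
    by (rule open_Collect_neq) simp_all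
  moreover have "K \<subseteq> (\<Union>a\<in>UNIV. {r. r a \<noteq> p a})"
  proof
    fix r assume "r \<in> K"
    then have "r \<noteq> p"
      using assms(2) by blast
    then show "r \<in> (\<Union>a\<in>UNIV. {r. r a \<noteq> p a})"
      by (auto simp: fun_eq_iff)
  qed
  ultimately obtain A where "finite A" "K \<subseteq> (\<Union>a\<in>A. {r. r a \<noteq> p a})"
    by (rule compactE_image[OF assms(1), of UNIV "\<lambda>a. {r. r a \<noteq> p a}"]) auto
  then show ?thesis
    using that by blast
qed

lemma linear_coeff_nonneg_if_nonneg_near_0:
  fixes a b :: real
  assumes "\<And>t. 0 < t \<Longrightarrow> t \<le> 1 \<Longrightarrow> 0 \<le> t * (a + t * b)"
  shows "0 \<le> a"
proof (rule ccontr)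
  assume "\<not> 0 \<le> a"
  define t where "t = min 1 (- a / (\<bar>b\<bar> + 1))"
  have "0 < - a / (\<bar>b\<bar> + 1)"
    using \<open>\<not> 0 \<le> a\<close> by (intro divide_pos_pos) auto
  then have t: "0 < t" "t \<le> 1"
    by (auto simp: t_def)
  have "t * b \<le> t * \<bar>b\<bar>"
    using t by (simp add: mult_left_mono)
  also have "\<dots> \<le> - a / (\<bar>b\<bar> + 1) * \<bar>b\<bar>"
    by (intro mult_right_mono) (auto simp: t_def)
  also have "\<dots> < - a"
    using \<open>\<not> 0 \<le> a\<close> by (simp add: field_simps)
  finally have "t * (a + t * b) < 0"
    using t by (simp add: mult_pos_neg)
  then show False
    using assms[OF t] by simp
qed

lemma convex_ms_nearest_point_inequality:
  fixes K :: "('a set \<Rightarrow> real) set" and e :: "'i \<Rightarrow> 'a set"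
  assumes "convex_ms K" "q \<in> K" "r \<in> K"
    and "\<And>q'. q' \<in> K \<Longrightarrow>
      (\<Sum>i\<in>I. (q (e i) - p (e i))\<^sup>2) \<le> (\<Sum>i\<in>I. (q' (e i) - p (e i))\<^sup>2)"
  shows "0 \<le> (\<Sum>i\<in>I. (q (e i) - p (e i)) * (r (e i) - q (e i)))"
proof -
  define S where "S = (\<Sum>i\<in>I. (q (e i) - p (e i)) * (r (e i) - q (e i)))"
  define E where "E = (\<Sum>i\<in>I. (r (e i) - q (e i))\<^sup>2)"
  have "0 \<le> t * (2 * S + t * E)" if t: "0 < t" "t \<le> 1" for t
  proof -
    define q' where "q' A = t * r A + (1 - t) * q A" for A
    have "q' \<in> K"
      using assms(1-3) t unfolding convex_ms_def q'_def by auto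
    have "(q' (e i) - p (e i))\<^sup>2 = (q (e i) - p (e i))\<^sup>2
        + t * (2 * ((q (e i) - p (e i)) * (r (e i) - q (e i))) + t * (r (e i) - q (e i))\<^sup>2)" for i
      unfolding q'_def by (simp add: power2_eq_square algebra_simps)
    then have "(\<Sum>i\<in>I. (q' (e i) - p (e i))\<^sup>2) = (\<Sum>i\<in>I. (q (e i) - p (e i))\<^sup>2) + t * (2 * S + t * E)"
      by (simp add: S_def E_def sum.distrib sum_distrib_left distrib_left)
    then show ?thesis
      using assms(4)[OF \<open>q' \<in> K\<close>] by simp
  qed
  then have "0 \<le> 2 * S"
    by (rule linear_coeff_nonneg_if_nonneg_near_0)
  then show ?thesis
    by (simp add: S_def)
qed

lemma compact_convex_ms_strict_separation:
  fixes K :: "('a set \<Rightarrow> real) set" and e :: "'i \<Rightarrow> 'a set"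
  assumes "compact K" "convex_ms K" "finite I"
    and "\<And>r. r \<in> K \<Longrightarrow> \<exists>i\<in>I. r (e i) \<noteq> p (e i)"
  obtains c \<delta> where "\<delta> > 0"
    "\<And>r. r \<in> K \<Longrightarrow> (\<Sum>i\<in>I. c i * p (e i)) + \<delta> \<le> (\<Sum>i\<in>I. c i * r (e i))"
proof (cases "K = {}")
  case True
  then show ?thesis
    using that[of 1] by simp
next
  case False
  define d where "d q = (\<Sum>i\<in>I. (q (e i) - p (e i))\<^sup>2)" for q :: "'a set \<Rightarrow> real"
  have "continuous_on K d"
    unfolding d_def by (intro continuous_intros continuous_on_subset[OF continuous_on_product_coordinates]) auto
  then obtain q where q: "q \<in> K" "\<And>q'. q' \<in> K \<Longrightarrow> d q \<le> d q'"
    using continuous_attains_inf[OF assms(1) False] by blast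
  define c where "c i = q (e i) - p (e i)" for i
  have "0 < (\<Sum>i\<in>I. c i * c i)"
  proof -
    obtain i where "i \<in> I" "c i \<noteq> 0"
      using assms(4)[OF q(1)] by (auto simp: c_def)
    then have "0 < c i * c i"
      using not_real_square_gt_zero by blast
    also have "\<dots> \<le> (\<Sum>i\<in>I. c i * c i)"
      using \<open>i \<in> I\<close> assms(3) by (intro member_le_sum) auto
    finally show ?thesis .
  qed
  moreover have "(\<Sum>i\<in>I. c i * p (e i)) + (\<Sum>i\<in>I. c i * c i) \<le> (\<Sum>i\<in>I. c i * r (e i))"
    if "r \<in> K" for r
  proof -
    have "0 \<le> (\<Sum>i\<in>I. c i * (r (e i) - q (e i)))"
      unfolding c_def using q(2) unfolding d_def
      by (rule convex_ms_nearest_point_inequality[OF assms(2) q(1) that])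
    moreover have "(\<Sum>i\<in>I. c i * r (e i)) = (\<Sum>i\<in>I. c i * p (e i)) + (\<Sum>i\<in>I. c i * c i)
        + (\<Sum>i\<in>I. c i * (r (e i) - q (e i)))"
      by (simp add: c_def algebra_simps sum.distrib sum_subtractf sum_distrib_left)
    ultimately show ?thesis
      by linarith
  qed
  ultimately show ?thesis
    using that by blast
qed

lemma events_containing_simple_act:
  assumes "algebra UNIV Sig" "finite A" "A \<subseteq> Sig"
  shows "(\<lambda>s. {a \<in> A. s \<in> a}) \<in> simple_acts Sig UNIV"
proof -
  interpret algebra UNIV Sig by fact
  have "(\<lambda>s. {a \<in> A. s \<in> a}) -` {T} \<in> Sig" for T
  proof (cases "T \<subseteq> A \<and> A \<noteq> {}")
    case True
    then have fibre: "(\<lambda>s. {a \<in> A. s \<in> a}) -` {T} = (\<Inter>a\<in>A. if a \<in> T then a else UNIV - a)"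
      by auto
    show ?thesis
      unfolding fibre using True assms(2,3) by (intro finite_INT) auto
  next
    case False
    then have "(\<lambda>s. {a \<in> A. s \<in> a}) -` {T} \<in> {{}, UNIV}"
      by auto
    then show ?thesis
      by auto
  qed
  moreover have "finite (range (\<lambda>s. {a \<in> A. s \<in> a}))"
    using assms(2) by (rule finite_subset[rotated, OF finite_Pow_iff[THEN iffD2]]) auto
  ultimately show ?thesis
    unfolding simple_acts_def by auto
qed

lemma fa_probs_strict_separation:
  assumes "algebra UNIV Sig" "K \<subseteq> fa_probs Sig" "compact K" "convex_ms K"
    and "p \<in> fa_probs Sig" "p \<notin> K"
  obtains \<phi> :: "'s \<Rightarrow> real" and \<delta> where "\<phi> \<in> simple_acts Sig UNIV" "\<delta> > 0"
    "\<And>r. r \<in> K \<Longrightarrow> EU id p \<phi> + \<delta> \<le> EU id r \<phi>"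
proof -
  obtain A where A: "finite A" "\<And>r. r \<in> K \<Longrightarrow> \<exists>a\<in>A. r a \<noteq> p a"
    using compact_finite_coordinates_distinguish[OF assms(3,6)] by blast
  define h where "h s = {a \<in> A \<inter> Sig. s \<in> a}" for s
  have h: "h \<in> simple_acts Sig UNIV"
    unfolding h_def using assms(1) A(1) by (intro events_containing_simple_act) auto
  have "\<exists>T\<in>range h. r (h -` {T}) \<noteq> p (h -` {T})" if "r \<in> K" for r
  proof (rule ccontr)
    assume "\<not> ?thesis"
    then have agree: "r (h -` B) = p (h -` B)" for B
      using fa_probs_eq_on_vimages[OF assms(1) _ assms(5) h] assms(2) \<open>r \<in> K\<close> by blast
    obtain a where a: "a \<in> A" "r a \<noteq> p a"
      using A(2)[OF \<open>r \<in> K\<close>] by blast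
    then have "a \<in> Sig"
      using fa_probs_outside assms(2,5) \<open>r \<in> K\<close> by (metis subsetD)
    then have "h -` {T. a \<in> T} = a"
      using a(1) by (auto simp: h_def)
    then show False
      using agree[of "{T. a \<in> T}"] a(2) by simp
  qed
  then obtain c \<delta> where "\<delta> > 0"
    "\<And>r. r \<in> K \<Longrightarrow> (\<Sum>T\<in>range h. c T * p (h -` {T})) + \<delta> \<le> (\<Sum>T\<in>range h. c T * r (h -` {T}))"
    using compact_convex_ms_strict_separation[OF assms(3,4) simple_acts_finite_range[OF h],
        where e = "\<lambda>T. h -` {T}" and p = p] by blast
  moreover have "EU id r (c \<circ> h) = (\<Sum>T\<in>range h. c T * r (h -` {T}))" if "r \<in> fa_probs Sig" for r
    using EU_comp[OF assms(1) that h, of id c] unfolding EU_def by simp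
  moreover have "c \<circ> h \<in> simple_acts Sig UNIV"
    using simple_acts_comp[OF assms(1) h] by blast
  ultimately show ?thesis
    using that[of "c \<circ> h" \<delta>] assms(2,5) by (simp add: subset_iff)
qed

section \<open>Comparing maxmin and maxmax criteria\<close>

lemma maxmin_separating_act:
  assumes "algebra UNIV Sig" "convex X" "affine_on X u" "nonconstant_on X u"
    and "C \<subseteq> fa_probs Sig" "compact C" "convex_ms C" "C \<noteq> {}"
    and "p \<in> fa_probs Sig" "p \<notin> C"
  obtains f x where "f \<in> simple_acts Sig X" "x \<in> X"
    "u x < (INF r\<in>C. EU u r f)" "EU u p f < u x"
proof -
  obtain \<phi> \<delta> where \<phi>: "\<phi> \<in> simple_acts Sig UNIV" and "\<delta> > 0"
    and sep: "\<And>r. r \<in> C \<Longrightarrow> EU id p \<phi> + \<delta> \<le> EU id r \<phi>"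
    using fa_probs_strict_separation[OF assms(1,5,6,7,9,10)] by blast
  define B where "B = (\<Sum>y\<in>range \<phi>. \<bar>y\<bar>)"
  define M where "M = B + \<delta>"
  have "B \<ge> 0"
    unfolding B_def by (intro sum_nonneg) auto
  then have "M > 0"
    using \<open>\<delta> > 0\<close> by (simp add: M_def)
  have \<phi>_le_B: "\<bar>\<phi> s\<bar> \<le> B" for s
    unfolding B_def by (rule member_le_sum) (use simple_acts_finite_range[OF \<phi>] in auto)
  have \<phi>_bound: "\<bar>\<phi> s\<bar> \<le> M" for s
    using \<phi>_le_B[of s] \<open>\<delta> > 0\<close> unfolding M_def by linarith
  obtain f \<beta> \<alpha> where f: "f \<in> simple_acts Sig X" and "\<beta> > 0"
    and EU_f: "\<And>r. r \<in> fa_probs Sig \<Longrightarrow> EU u r f = \<alpha> + \<beta> * EU id r \<phi>"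
    and in_image: "\<And>w. \<bar>w\<bar> \<le> M \<Longrightarrow> \<alpha> + \<beta> * w \<in> u ` X"
    using simple_act_with_rescaled_EU[OF assms(1-4) \<phi> \<open>M > 0\<close> \<phi>_bound] by metis
  have "\<bar>EU id p \<phi>\<bar> \<le> B"
    using EU_abs_le[OF assms(1,9) \<phi>, of id] by (simp add: B_def)
  then have "\<bar>EU id p \<phi> + \<delta> / 2\<bar> \<le> M"
    using \<open>\<delta> > 0\<close> by (auto simp: M_def abs_le_iff)
  then obtain x where x: "\<alpha> + \<beta> * (EU id p \<phi> + \<delta> / 2) = u x" "x \<in> X"
    by (rule imageE[OF in_image])
  show ?thesis
  proof (rule that[OF f x(2)])
    have "u x < \<alpha> + \<beta> * (EU id p \<phi> + \<delta>)"
      using x(1)[symmetric] \<open>\<beta> > 0\<close> \<open>\<delta> > 0\<close> by simp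
    also have "\<dots> \<le> (INF r\<in>C. EU u r f)"
    proof (rule cINF_greatest[OF assms(8)])
      fix r assume "r \<in> C"
      then have "\<beta> * (EU id p \<phi> + \<delta>) \<le> \<beta> * EU id r \<phi>"
        using sep \<open>\<beta> > 0\<close> by (intro mult_left_mono) auto
      then show "\<alpha> + \<beta> * (EU id p \<phi> + \<delta>) \<le> EU u r f"
        using EU_f \<open>r \<in> C\<close> assms(5) by auto
    qed
    finally show "u x < (INF r\<in>C. EU u r f)" .
    show "EU u p f < u x"
      using EU_f[OF assms(9)] x(1)[symmetric] \<open>\<beta> > 0\<close> \<open>\<delta> > 0\<close> by simp
  qed
qed

lemma maxmin_comparison_iff_subset:
  assumes "algebra UNIV Sig" "convex X" "affine_on X u" "nonconstant_on X u"
    and "C1 \<subseteq> fa_probs Sig" "compact C1" "convex_ms C1" "C1 \<noteq> {}"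
    and "C2 \<subseteq> fa_probs Sig" "C2 \<noteq> {}"
  shows "(\<forall>f\<in>simple_acts Sig X. \<forall>x\<in>X.
            u x < (INF p\<in>C1. EU u p f) \<longrightarrow> u x < (INF p\<in>C2. EU u p f))
         \<longleftrightarrow> C2 \<subseteq> C1"
proof
  assume dom: "\<forall>f\<in>simple_acts Sig X. \<forall>x\<in>X.
    u x < (INF p\<in>C1. EU u p f) \<longrightarrow> u x < (INF p\<in>C2. EU u p f)"
  show "C2 \<subseteq> C1"
  proof
    fix p assume "p \<in> C2"
    show "p \<in> C1"
    proof (rule ccontr)
      assume "p \<notin> C1"
      obtain f x where f: "f \<in> simple_acts Sig X" and x: "x \<in> X"
        and "u x < (INF r\<in>C1. EU u r f)" "EU u p f < u x"
        using maxmin_separating_act[OF assms(1-8)] \<open>p \<in> C2\<close> \<open>p \<notin> C1\<close> assms(9) by blast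
      then have "u x < (INF r\<in>C2. EU u r f)"
        using dom by blast
      also have "\<dots> \<le> EU u p f"
        by (rule cINF_lower[OF EU_bdd(1)[OF assms(1,9) f] \<open>p \<in> C2\<close>])
      finally show False
        using \<open>EU u p f < u x\<close> by simp
    qed
  qed
next
  assume "C2 \<subseteq> C1"
  show "\<forall>f\<in>simple_acts Sig X. \<forall>x\<in>X.
    u x < (INF p\<in>C1. EU u p f) \<longrightarrow> u x < (INF p\<in>C2. EU u p f)"
  proof (intro ballI impI)
    fix f x assume f: "f \<in> simple_acts Sig X" and "x \<in> X" and "u x < (INF p\<in>C1. EU u p f)"
    moreover have "(INF p\<in>C1. EU u p f) \<le> (INF p\<in>C2. EU u p f)"
      by (rule cINF_superset_mono[OF assms(10) EU_bdd(1)[OF assms(1,5) f] \<open>C2 \<subseteq> C1\<close>]) simp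
    ultimately show "u x < (INF p\<in>C2. EU u p f)"
      by simp
  qed
qed

lemma maxmax_comparison_iff_subset:
  assumes "algebra UNIV Sig" "convex X" "affine_on X u" "nonconstant_on X u"
    and "D1 \<subseteq> fa_probs Sig" "compact D1" "convex_ms D1" "D1 \<noteq> {}"
    and "D2 \<subseteq> fa_probs Sig" "D2 \<noteq> {}"
  shows "(\<forall>f\<in>simple_acts Sig X. \<forall>x\<in>X.
            (SUP p\<in>D1. EU u p f) < u x \<longrightarrow> (SUP p\<in>D2. EU u p f) < u x)
         \<longleftrightarrow> D2 \<subseteq> D1"
proof -
  have SUP_eq: "(SUP p\<in>D. EU u p f) = - (INF p\<in>D. EU (\<lambda>y. - u y) p f)" for D f
    by (simp add: EU_uminus Inf_real_def image_image)
  have "affine_on X (\<lambda>y. - u y)" "nonconstant_on X (\<lambda>y. - u y)"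
    using assms(3,4) unfolding affine_on_def nonconstant_on_def by (auto simp: algebra_simps)
  from maxmin_comparison_iff_subset[OF assms(1,2) this assms(5-10)]
  show ?thesis
    unfolding SUP_eq by (simp add: minus_less_iff)
qed

lemma hp_rep_pref_const_iff:
  assumes "algebra UNIV Sig" "hp_rep Sig X pref u C D" "f \<in> simple_acts Sig X" "x \<in> X"
  shows "pref f (\<lambda>_. x) \<longleftrightarrow> u x < (INF p\<in>C. EU u p f)"
    and "pref (\<lambda>_. x) f \<longleftrightarrow> (SUP p\<in>D. EU u p f) < u x"
proof -
  have C: "C \<subseteq> fa_probs Sig" and D: "D \<subseteq> fa_probs Sig" and "C \<inter> D \<noteq> {}"
    using assms(2) unfolding hp_rep_def by blast+
  have pref: "\<forall>f\<in>simple_acts Sig X. \<forall>g\<in>simple_acts Sig X. pref f g \<longleftrightarrow>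
      (INF p\<in>C. EU u p g) < (INF p\<in>C. EU u p f) \<and> (SUP p\<in>D. EU u p g) < (SUP p\<in>D. EU u p f)"
    using assms(2) unfolding hp_rep_def by (elim conjE)
  obtain q where "q \<in> C" "q \<in> D"
    using \<open>C \<inter> D \<noteq> {}\<close> by blast
  have "(INF p\<in>C. EU u p (\<lambda>_. x)) = (INF p\<in>C. u x)" "(SUP p\<in>D. EU u p (\<lambda>_. x)) = (SUP p\<in>D. u x)"
    using C D by (auto intro!: INF_cong SUP_cong simp: EU_const[of _ Sig] subset_iff)
  then have const: "(INF p\<in>C. EU u p (\<lambda>_. x)) = u x" "(SUP p\<in>D. EU u p (\<lambda>_. x)) = u x"
    using \<open>q \<in> C\<close> \<open>q \<in> D\<close> by (metis cINF_const cSUP_const empty_iff)+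
  have "(INF p\<in>C. EU u p f) \<le> EU u q f" "EU u q f \<le> (SUP p\<in>D. EU u p f)"
    using cINF_lower[OF EU_bdd(1)[OF assms(1) C assms(3)] \<open>q \<in> C\<close>]
      cSUP_upper[OF \<open>q \<in> D\<close> EU_bdd(2)[OF assms(1) D assms(3)]] by auto
  then show "pref f (\<lambda>_. x) \<longleftrightarrow> u x < (INF p\<in>C. EU u p f)"
    and "pref (\<lambda>_. x) f \<longleftrightarrow> (SUP p\<in>D. EU u p f) < u x"
    using pref simple_acts_const[OF assms(1,4)] assms(3) const by auto
qed

theorem proposition2:
  fixes Sig :: "'s set set" and X :: "'x::real_vector set" and u :: "'x \<Rightarrow> real"
    and pref1 pref2 :: "('s \<Rightarrow> 'x) \<Rightarrow> ('s \<Rightarrow> 'x) \<Rightarrow> bool"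
    and C1 D1 C2 D2 :: "('s set \<Rightarrow> real) set"
  assumes "algebra UNIV Sig"
    and "convex X" and "\<exists>x\<in>X. \<exists>y\<in>X. x \<noteq> y"
    and "affine_on X u" and "nonconstant_on X u"
    and "hp_unique_rep Sig X pref1 u C1 D1"
    and "hp_unique_rep Sig X pref2 u C2 D2"
  shows "(more_ambiguity_averse Sig X pref1 pref2 \<longleftrightarrow> C2 \<subseteq> C1)
       \<and> (more_ambiguity_loving Sig X pref1 pref2 \<longleftrightarrow> D2 \<subseteq> D1)"
proof -
  have hp1: "hp_rep Sig X pref1 u C1 D1" and hp2: "hp_rep Sig X pref2 u C2 D2"
    using assms(6,7) unfolding hp_unique_rep_def by blast+
  have C1: "C1 \<subseteq> fa_probs Sig" "compact C1" "convex_ms C1" "C1 \<noteq> {}"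
    and D1: "D1 \<subseteq> fa_probs Sig" "compact D1" "convex_ms D1" "D1 \<noteq> {}"
    using hp1 unfolding hp_rep_def by auto
  have C2: "C2 \<subseteq> fa_probs Sig" "C2 \<noteq> {}" and D2: "D2 \<subseteq> fa_probs Sig" "D2 \<noteq> {}"
    using hp2 unfolding hp_rep_def by auto
  note maxmin = maxmin_comparison_iff_subset[OF assms(1,2,4,5) C1 C2]
  note maxmax = maxmax_comparison_iff_subset[OF assms(1,2,4,5) D1 D2]
  show ?thesis
    unfolding more_ambiguity_averse_def more_ambiguity_loving_def maxmin[symmetric] maxmax[symmetric]
    using hp_rep_pref_const_iff[OF assms(1) hp1] hp_rep_pref_const_iff[OF assms(1) hp2]
    by auto
qed

end
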